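(* Let $\Sigma=(\mathbb{N}_0,X,U,\mathscr{U},\phi)$ be a control system as in the standing setup and let $Q\subset X$ be a control set with $\operatorname{cl}\operatorname{Int}(Q)=\operatorname{cl}Q$. Then $Q$ is either equi-invariant in the mean or unstable in the mean.
   Context: Standing setup: $(X,d)$ is a metric space, $U$ is a compact metric space, and $F:X\times U\to X$ is a map such that $F_u:=F(\cdot,u)$ is continuous for every $u\in U$. Let $\mathscr U=U^{\mathbb N_0}$ with the product topology. For $\omega=(\omega_0,\omega_1,\dots)\in\mathscr U$, $x\in X$, set $\phi(0,x,\omega)=x$ and $\phi(k,x,\omega)=F_{\omega_{k-1}}\circ\cdots\circ F_{\omega_0}(x)$ for $k\ge1$. It is assumed that $\phi:\mathbb N_0\times X\times\mathscr U\to X$ is continuous. Notation: $\mathbb N=\{1,2,\dots\}$; $B(x,\delta)$ is the open ball; $d(y,Q)=\inf_{q\in Q}d(y,q)$; $\operatorname{Int}$ and $\operatorname{cl}$ denote interior and closure in $X$. Control set: $D\subset X$ is a control set if (i) for every $x\in D$ there is $\omega\in\mathscr U$ with $\phi(k,x,\omega)\in D$ for all $k\in\mathbb N_0$; (ii) for every $x\in D$, $D\subset\operatorname{cl}\mathcal O^+(x)$, where $\mathcal O^+(x)=\{\phi(m,x,\omega):m\in\mathbb N_0,\omega\in\mathscr U\}$; (iii) $D$ is maximal with (i) and (ii). $x\in Q$ is an equi-invariant point in the mean of $Q$ if for every $\varepsilon>0$ there exist $\delta>0$ and $\omega\in\mathscr U$ such that $\frac1n\sum_{i=0}^{n-1}d(\phi(i,y,\omega),Q)<\varepsilon$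 for all $n\in\mathbb N$ and all $y\in B(x,\delta)\cap Q$; $Q$ is equi-invariant in the mean if every point of $Q$ is such a point. $Q$ is unstable in the mean if there exists $\varepsilon>0$ such that for every $x\in Q$, every $\delta>0$ and every $\omega\in\mathscr U$ there exist $y\in B(x,\delta)\cap Q$ and $m\in\mathbb N$ with $\frac1m\sum_{i=0}^{m-1}d(\phi(i,y,\omega),Q)\ge\varepsilon$. *)

theory Defs
  imports "HOL-Analysis.Analysis"
begin

text \<open>Trajectories of the discrete-time control system x_{k+1} = F(x_k, omega_k).
  The state space X is the whole type 'a; the control range U is a set of 'b.\<close>

primrec phi :: "('a \<Rightarrow> 'b \<Rightarrow> 'a) \<Rightarrow> nat \<Rightarrow> 'a \<Rightarrow> (nat \<Rightarrow> 'b) \<Rightarrow> 'a" where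
  "phi F 0 x \<omega> = x"
| "phi F (Suc k) x \<omega> = F (phi F k x \<omega>) (\<omega> k)"

definition ctrls :: "'b set \<Rightarrow> (nat \<Rightarrow> 'b) set" where
  "ctrls U = {\<omega>. \<forall>i. \<omega> i \<in> U}"

definition pos_orbit :: "('a \<Rightarrow> 'b \<Rightarrow> 'a) \<Rightarrow> 'b set \<Rightarrow> 'a \<Rightarrow> 'a set" where
  "pos_orbit F U x = {phi F m x \<omega> | m \<omega>. \<omega> \<in> ctrls U}"

definition ctrl_set_props :: "('a::topological_space \<Rightarrow> 'b \<Rightarrow> 'a) \<Rightarrow> 'b set \<Rightarrow> 'a set \<Rightarrow> bool" where
  "ctrl_set_props F U D \<longleftrightarrow>
     (\<forall>x\<in>D. \<exists>\<omega>\<in>ctrls U. \<forall>k. phi F k x \<omega> \<in> D) \<and>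
     (\<forall>x\<in>D. D \<subseteq> closure (pos_orbit F U x))"

definition control_set :: "('a::topological_space \<Rightarrow> 'b \<Rightarrow> 'a) \<Rightarrow> 'b set \<Rightarrow> 'a set \<Rightarrow> bool" where
  "control_set F U D \<longleftrightarrow> ctrl_set_props F U D \<and>
     (\<forall>D'. ctrl_set_props F U D' \<and> D \<subseteq> D' \<longrightarrow> D' = D)"

definition equi_inv_mean_point ::
  "('a::metric_space \<Rightarrow> 'b \<Rightarrow> 'a) \<Rightarrow> 'b set \<Rightarrow> 'a set \<Rightarrow> 'a \<Rightarrow> bool" where
  "equi_inv_mean_point F U Q x \<longleftrightarrow> x \<in> Q \<and>
     (\<forall>\<epsilon>>0. \<exists>\<delta>>0. \<exists>\<omega>\<in>ctrls U. \<forall>n::nat. \<forall>y \<in> ball x \<delta> \<inter> Q. n \<ge> 1 \<longrightarrow>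
        (1 / real n) * (\<Sum>i<n. infdist (phi F i y \<omega>) Q) < \<epsilon>)"

definition equi_inv_mean :: "('a::metric_space \<Rightarrow> 'b \<Rightarrow> 'a) \<Rightarrow> 'b set \<Rightarrow> 'a set \<Rightarrow> bool" where
  "equi_inv_mean F U Q \<longleftrightarrow> (\<forall>x\<in>Q. equi_inv_mean_point F U Q x)"

definition unstable_mean :: "('a::metric_space \<Rightarrow> 'b \<Rightarrow> 'a) \<Rightarrow> 'b set \<Rightarrow> 'a set \<Rightarrow> bool" where
  "unstable_mean F U Q \<longleftrightarrow> (\<exists>\<epsilon>>0. \<forall>x\<in>Q. \<forall>\<delta>>0. \<forall>\<omega>\<in>ctrls U.
     \<exists>y \<in> ball x \<delta> \<inter> Q. \<exists>m::nat. m \<ge> 1 \<and>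
        (1 / real m) * (\<Sum>i<m. infdist (phi F i y \<omega>) Q) \<ge> \<epsilon>)"

end

theory Submission
  imports Defs
begin

text \<open>If Q is not unstable in the mean, then for every \<open>\<epsilon>\<close> some point x of Q has a neighbourhood
  in Q whose mean distances to Q stay below \<open>\<epsilon>\<close> under a single control. Any z \<in> Q can be steered
  into that neighbourhood, even into its interior part, since interior points of Q are dense in Q.
  By maximality of the control set the steering trajectory never leaves Q, and by continuity the
  same control steers all points near z along nearby trajectories into the neighbourhood of x;
  appending the control of x keeps all later averages small, so z is equi-invariant in the mean.\<close>


lemma phi_add: "phi F (m + j) y \<omega> = phi F j (phi F m y \<omega>) (\<lambda>t. \<omega> (m + t))"
  by (induction j) auto

lemma phi_cong: "(\<And>t. t < k \<Longrightarrow> \<omega> t = \<omega>' t) \<Longrightarrow> phi F k y \<omega> = phi F k y \<omega>'"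
  by (induction k) auto

lemma continuous_on_phi:
  assumes "\<And>u. u \<in> U \<Longrightarrow> continuous_on UNIV (\<lambda>x. F x u)" and "\<omega> \<in> ctrls U"
  shows "continuous_on UNIV (\<lambda>x. phi F k x \<omega>)"
proof (induction k)
  case (Suc k)
  have "continuous_on UNIV (\<lambda>x. F x (\<omega> k))"
    using assms by (simp add: ctrls_def)
  from continuous_on_compose[OF Suc continuous_on_subset[OF this subset_UNIV]]
  show ?case by (simp add: o_def)
qed simp

definition ctrl_append :: "nat \<Rightarrow> (nat \<Rightarrow> 'b) \<Rightarrow> (nat \<Rightarrow> 'b) \<Rightarrow> nat \<Rightarrow> 'b" where
  "ctrl_append m \<omega> \<omega>' = (\<lambda>t. if t < m then \<omega> t else \<omega>' (t - m))"

lemma ctrl_append_in_ctrls: "\<omega> \<in> ctrls U \<Longrightarrow> \<omega>' \<in> ctrls U \<Longrightarrow> ctrl_append m \<omega> \<omega>' \<in> ctrls U"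
  by (simp add: ctrls_def ctrl_append_def)

lemma shift_in_ctrls: "\<omega> \<in> ctrls U \<Longrightarrow> (\<lambda>t. \<omega> (j + t)) \<in> ctrls U"
  by (simp add: ctrls_def)

lemma phi_ctrl_append_le: "i \<le> m \<Longrightarrow> phi F i y (ctrl_append m \<omega> \<omega>') = phi F i y \<omega>"
  by (rule phi_cong) (simp add: ctrl_append_def)

lemma phi_ctrl_append_add: "phi F (m + j) y (ctrl_append m \<omega> \<omega>') = phi F j (phi F m y \<omega>) \<omega>'"
proof -
  have "(\<lambda>t. ctrl_append m \<omega> \<omega>' (m + t)) = \<omega>'"
    by (simp add: ctrl_append_def)
  then show ?thesis
    using phi_add[of F m j y "ctrl_append m \<omega> \<omega>'"] phi_ctrl_append_le[of m m F y \<omega> \<omega>'] by simp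
qed


lemma phi_in_pos_orbit: "\<omega> \<in> ctrls U \<Longrightarrow> phi F k x \<omega> \<in> pos_orbit F U x"
  unfolding pos_orbit_def by blast

lemma pos_orbit_trans:
  assumes "a \<in> pos_orbit F U b"
  shows "pos_orbit F U a \<subseteq> pos_orbit F U b"
proof
  fix c assume "c \<in> pos_orbit F U a"
  then obtain k \<omega>' where c: "c = phi F k a \<omega>'" "\<omega>' \<in> ctrls U"
    by (auto simp: pos_orbit_def)
  obtain m \<omega> where a: "a = phi F m b \<omega>" "\<omega> \<in> ctrls U"
    using assms by (auto simp: pos_orbit_def)
  have "c = phi F (m + k) b (ctrl_append m \<omega> \<omega>')"
    unfolding c(1) a(1) by (rule phi_ctrl_append_add[symmetric])
  then show "c \<in> pos_orbit F U b"
    using phi_in_pos_orbit[OF ctrl_append_in_ctrls[OF a(2) c(2)]] by simp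
qed

lemma closure_pos_orbit_subset:
  assumes F: "\<And>u. u \<in> U \<Longrightarrow> continuous_on UNIV (\<lambda>x. F x u)"
    and a: "a \<in> closure (pos_orbit F U b)"
  shows "closure (pos_orbit F U a) \<subseteq> closure (pos_orbit F U b)"
proof (rule closure_minimal[OF _ closed_closure], rule subsetI)
  fix c assume "c \<in> pos_orbit F U a"
  then obtain k \<omega> where c: "c = phi F k a \<omega>" "\<omega> \<in> ctrls U"
    by (auto simp: pos_orbit_def)
  let ?f = "\<lambda>x. phi F k x \<omega>"
  have "?f ` pos_orbit F U b \<subseteq> closure (pos_orbit F U b)"
  proof (rule image_subsetI)
    fix e assume "e \<in> pos_orbit F U b"
    then have "?f e \<in> pos_orbit F U b"
      using pos_orbit_trans phi_in_pos_orbit[OF c(2)] by (metis subsetD)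
    then show "?f e \<in> closure (pos_orbit F U b)"
      using closure_subset by blast
  qed
  moreover have "continuous_on (closure (pos_orbit F U b)) ?f"
    using continuous_on_phi[OF F c(2)] subset_UNIV by (rule continuous_on_subset)
  ultimately have "?f ` closure (pos_orbit F U b) \<subseteq> closure (pos_orbit F U b)"
    using image_closure_subset closed_closure by blast
  then show "c \<in> closure (pos_orbit F U b)"
    using a c(1) by blast
qed


lemma ctrl_set_props_invariant_Un_trajectory:
  assumes Q: "ctrl_set_props F U Q" and \<omega>: "\<omega> \<in> ctrls U" and mQ: "phi F m z \<omega> \<in> Q"
    and v: "v \<in> Q \<union> (\<lambda>j. phi F j z \<omega>) ` {..m}"
  shows "\<exists>\<omega>'\<in>ctrls U. \<forall>k. phi F k v \<omega>' \<in> Q \<union> (\<lambda>j. phi F j z \<omega>) ` {..m}"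
proof (cases "v \<in> Q")
  case True
  then show ?thesis
    using Q by (fastforce simp: ctrl_set_props_def)
next
  case False
  let ?D = "Q \<union> (\<lambda>j. phi F j z \<omega>) ` {..m}"
  obtain j where j: "v = phi F j z \<omega>" "j \<le> m"
    using v False by blast
  obtain \<omega>q where \<omega>q: "\<omega>q \<in> ctrls U" "\<forall>k. phi F k (phi F m z \<omega>) \<omega>q \<in> Q"
    using Q mQ by (auto simp: ctrl_set_props_def)
  define \<omega>'' where "\<omega>'' = ctrl_append m \<omega> \<omega>q"
  have \<omega>'': "phi F n z \<omega>'' \<in> ?D" for n
  proof (cases "n \<le> m")
    case True
    then show ?thesis
      unfolding \<omega>''_def phi_ctrl_append_le[OF True] by blast
  next
    case False
    then obtain k where "n = m + k"
      using le_Suc_ex nat_le_linear by blast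
    then show ?thesis
      using \<omega>q(2) by (simp add: \<omega>''_def phi_ctrl_append_add)
  qed
  have "v = phi F j z \<omega>''"
    unfolding j(1) \<omega>''_def by (rule phi_ctrl_append_le[OF j(2), symmetric])
  then have "phi F k v (\<lambda>t. \<omega>'' (j + t)) \<in> ?D" for k
    using \<omega>''[of "j + k"] by (simp add: phi_add)
  moreover have "(\<lambda>t. \<omega>'' (j + t)) \<in> ctrls U"
    unfolding \<omega>''_def by (intro shift_in_ctrls ctrl_append_in_ctrls \<omega> \<omega>q(1))
  ultimately show ?thesis
    by blast
qed

lemma ctrl_set_props_reachable_Un_trajectory:
  assumes F: "\<And>u. u \<in> U \<Longrightarrow> continuous_on UNIV (\<lambda>x. F x u)"
    and Q: "ctrl_set_props F U Q" and z: "z \<in> Q" and \<omega>: "\<omega> \<in> ctrls U"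
    and mQ: "phi F m z \<omega> \<in> Q" and v: "v \<in> Q \<union> (\<lambda>j. phi F j z \<omega>) ` {..m}"
  shows "Q \<union> (\<lambda>j. phi F j z \<omega>) ` {..m} \<subseteq> closure (pos_orbit F U v)"
proof -
  have Q_reach: "Q \<subseteq> closure (pos_orbit F U q)" if "q \<in> Q" for q
    using Q that by (simp add: ctrl_set_props_def)
  have Q_sub: "Q \<subseteq> closure (pos_orbit F U v)"
  proof (cases "v \<in> Q")
    case False
    then obtain j where j: "v = phi F j z \<omega>" "j \<le> m"
      using v by blast
    have "phi F m z \<omega> = phi F (m - j) v (\<lambda>t. \<omega> (j + t))"
      using phi_add[of F j "m - j" z \<omega>] j by simp
    then have "phi F m z \<omega> \<in> pos_orbit F U v"
      using phi_in_pos_orbit[OF shift_in_ctrls[OF \<omega>], of F "m - j" v j] by simp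
    then have "closure (pos_orbit F U (phi F m z \<omega>)) \<subseteq> closure (pos_orbit F U v)"
      by (intro closure_mono pos_orbit_trans)
    then show ?thesis
      using Q_reach[OF mQ] by (rule subset_trans[rotated])
  qed (rule Q_reach)
  have "z \<in> closure (pos_orbit F U v)"
    using Q_sub z by blast
  note closure_pos_orbit_subset[OF F this]
  moreover have "(\<lambda>j. phi F j z \<omega>) ` {..m} \<subseteq> pos_orbit F U z"
    using phi_in_pos_orbit[OF \<omega>] by (rule image_subsetI)
  ultimately have "(\<lambda>j. phi F j z \<omega>) ` {..m} \<subseteq> closure (pos_orbit F U v)"
    using closure_subset by blast
  then show ?thesis
    using Q_sub by blast
qed

text \<open>A control set contains every trajectory that starts and ends in it: adding the trajectory
  keeps both defining properties, so maximality forbids it to add anything.\<close>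

lemma control_set_trajectory_stays:
  assumes F: "\<And>u. u \<in> U \<Longrightarrow> continuous_on UNIV (\<lambda>x. F x u)"
    and Q: "control_set F U Q" and z: "z \<in> Q" and \<omega>: "\<omega> \<in> ctrls U"
    and mQ: "phi F m z \<omega> \<in> Q" and "i \<le> m"
  shows "phi F i z \<omega> \<in> Q"
proof -
  have Qp: "ctrl_set_props F U Q"
    using Q by (simp add: control_set_def)
  have "ctrl_set_props F U (Q \<union> (\<lambda>j. phi F j z \<omega>) ` {..m})"
    unfolding ctrl_set_props_def
    using ctrl_set_props_invariant_Un_trajectory[OF Qp \<omega> mQ]
      ctrl_set_props_reachable_Un_trajectory[OF F Qp z \<omega> mQ] by blast
  then have "Q \<union> (\<lambda>j. phi F j z \<omega>) ` {..m} = Q"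
    using Q by (simp add: control_set_def)
  then show ?thesis
    using \<open>i \<le> m\<close> by blast
qed

lemma ctrl_set_props_reach_open:
  assumes "ctrl_set_props F U Q" and "z \<in> Q" and "open W" and "W \<inter> Q \<noteq> {}"
  obtains m \<omega> where "\<omega> \<in> ctrls U" and "phi F m z \<omega> \<in> W"
proof -
  have "Q \<subseteq> closure (pos_orbit F U z)"
    using assms(1,2) by (simp add: ctrl_set_props_def)
  then have "W \<inter> closure (pos_orbit F U z) \<noteq> {}"
    using assms(4) by blast
  then have "W \<inter> pos_orbit F U z \<noteq> {}"
    using open_Int_closure_eq_empty[OF \<open>open W\<close>] by blast
  then show ?thesis
    using that unfolding pos_orbit_def by blast
qed


lemma phi_finite_horizon_nhd:
  assumes F: "\<And>u. u \<in> U \<Longrightarrow> continuous_on UNIV (\<lambda>x. F x u)" and \<omega>: "\<omega> \<in> ctrls U"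
    and "open W" and "phi F m z \<omega> \<in> W" and "e > 0"
  obtains \<eta> where "\<eta> > 0" and
    "\<And>y i. y \<in> ball z \<eta> \<Longrightarrow> i \<le> m \<Longrightarrow> dist (phi F i y \<omega>) (phi F i z \<omega>) < e"
    and "\<And>y. y \<in> ball z \<eta> \<Longrightarrow> phi F m y \<omega> \<in> W"
proof -
  define V where "V = (\<Inter>i\<in>{..m}. (\<lambda>y. phi F i y \<omega>) -` ball (phi F i z \<omega>) e)
    \<inter> (\<lambda>y. phi F m y \<omega>) -` W"
  have "open ((\<lambda>y. phi F i y \<omega>) -` S)" if "open S" for i S
    using continuous_on_phi[OF F \<omega>] that by (simp add: continuous_on_open_vimage)
  then have "open V"
    unfolding V_def using \<open>open W\<close> by (intro open_Int open_INT) auto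
  moreover have "z \<in> V"
    unfolding V_def using assms by simp
  ultimately obtain \<eta> where "\<eta> > 0" and \<eta>: "ball z \<eta> \<subseteq> V"
    using openE by blast
  have V_iff: "y \<in> V \<longleftrightarrow>
      (\<forall>i\<le>m. dist (phi F i y \<omega>) (phi F i z \<omega>) < e) \<and> phi F m y \<omega> \<in> W" for y
    by (auto simp: V_def dist_commute)
  show ?thesis
    by (rule that[OF \<open>\<eta> > 0\<close>]) (use \<eta> V_iff in blast)+
qed


definition mean_dist :: "('a::metric_space \<Rightarrow> 'b \<Rightarrow> 'a) \<Rightarrow> 'a set \<Rightarrow> 'a \<Rightarrow> (nat \<Rightarrow> 'b) \<Rightarrow> nat \<Rightarrow> real"
  where "mean_dist F Q y \<omega> n = (1 / real n) * (\<Sum>i<n. infdist (phi F i y \<omega>) Q)"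

lemma mean_dist_le_iff:
  "n \<ge> 1 \<Longrightarrow> mean_dist F Q y \<omega> n \<le> c \<longleftrightarrow> (\<Sum>i<n. infdist (phi F i y \<omega>) Q) \<le> real n * c"
  by (simp add: mean_dist_def field_simps)

lemma sum_le_prefix_suffix:
  fixes f :: "nat \<Rightarrow> real"
  assumes "\<And>i. i < m \<Longrightarrow> f i \<le> c" and "\<And>k. (\<Sum>j<k. f (m + j)) \<le> real k * c"
  shows "(\<Sum>i<n. f i) \<le> real n * c"
proof (cases "n \<le> m")
  case True
  then show ?thesis
    using sum_bounded_above[of "{..<n}" f c] assms(1) by simp
next
  case False
  then obtain k where k: "n = m + k"
    using le_Suc_ex nat_le_linear by blast
  have "(\<Sum>i<m. f i) \<le> real m * c"
    using sum_bounded_above[of "{..<m}" f c] assms(1) by simp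
  moreover have "(\<Sum>i<n. f i) = (\<Sum>i<m. f i) + (\<Sum>j<k. f (m + j))"
    unfolding k by (induction k) (simp_all add: add.assoc)
  ultimately show ?thesis
    using assms(2)[of k] k by (simp add: distrib_right)
qed

lemma not_unstable_meanD:
  assumes "\<not> unstable_mean F U Q" and "\<epsilon> > 0"
  shows "\<exists>x\<in>Q. \<exists>\<delta>>0. \<exists>\<omega>\<in>ctrls U. \<forall>y\<in>ball x \<delta> \<inter> Q. \<forall>n\<ge>1. mean_dist F Q y \<omega> n < \<epsilon>"
  using assms unfolding unstable_mean_def mean_dist_def by (meson not_le)

lemma equi_inv_mean_pointI:
  assumes "z \<in> Q"
    and "\<And>\<epsilon>. \<epsilon> > 0 \<Longrightarrow> \<exists>\<eta>>0. \<exists>\<omega>\<in>ctrls U. \<forall>y\<in>ball z \<eta> \<inter> Q. \<forall>n\<ge>1. mean_dist F Q y \<omega> n < \<epsilon>"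
  shows "equi_inv_mean_point F U Q z"
  using assms unfolding equi_inv_mean_point_def mean_dist_def by meson

text \<open>The trajectory from z must enter the interior of Q near x, so that nearby initial points
  still arrive in Q, where the mean bound at x applies.\<close>

lemma mean_dist_bound_spreads:
  assumes F: "\<And>u. u \<in> U \<Longrightarrow> continuous_on UNIV (\<lambda>x. F x u)"
    and Q: "control_set F U Q" and dense: "closure (interior Q) = closure Q"
    and z: "z \<in> Q" and x: "x \<in> Q" and "\<delta> > 0" and \<omega>: "\<omega> \<in> ctrls U" and "\<epsilon> > 0"
    and bound: "\<forall>y\<in>ball x \<delta> \<inter> Q. \<forall>n\<ge>1. mean_dist F Q y \<omega> n \<le> \<epsilon>"
  shows "\<exists>\<eta>>0. \<exists>\<omega>'\<in>ctrls U. \<forall>y\<in>ball z \<eta> \<inter> Q. \<forall>n\<ge>1. mean_dist F Q y \<omega>' n \<le> \<epsilon>"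
proof -
  define W where "W = ball x \<delta> \<inter> interior Q"
  have W_sub: "W \<subseteq> ball x \<delta> \<inter> Q"
    using interior_subset[of Q] by (auto simp: W_def)
  have "open W"
    by (simp add: W_def open_Int)
  have "x \<in> closure (interior Q)"
    using dense x closure_subset by blast
  then obtain p where "p \<in> interior Q" "dist p x < \<delta>"
    using \<open>\<delta> > 0\<close> unfolding closure_approachable by blast
  then have "p \<in> W \<inter> Q"
    using W_sub by (auto simp: W_def dist_commute)
  then have "W \<inter> Q \<noteq> {}"
    by blast
  moreover have "ctrl_set_props F U Q"
    using Q by (simp add: control_set_def)
  ultimately obtain m \<omega>1 where \<omega>1: "\<omega>1 \<in> ctrls U" "phi F m z \<omega>1 \<in> W"
    using ctrl_set_props_reach_open[OF _ z \<open>open W\<close>] by metis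
  obtain \<eta> where "\<eta> > 0" and close: "\<And>y i. y \<in> ball z \<eta> \<Longrightarrow> i \<le> m \<Longrightarrow>
      dist (phi F i y \<omega>1) (phi F i z \<omega>1) < \<epsilon>" and
    arrive: "\<And>y. y \<in> ball z \<eta> \<Longrightarrow> phi F m y \<omega>1 \<in> W"
    using phi_finite_horizon_nhd[OF F \<omega>1(1) \<open>open W\<close> \<omega>1(2) \<open>\<epsilon> > 0\<close>] by blast
  have mQ: "phi F m z \<omega>1 \<in> Q"
    using \<omega>1(2) W_sub by blast
  have stays: "phi F i z \<omega>1 \<in> Q" if "i \<le> m" for i
    using control_set_trajectory_stays[OF F Q z \<omega>1(1) mQ that] .
  have "mean_dist F Q y (ctrl_append m \<omega>1 \<omega>) n \<le> \<epsilon>"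
    if y: "y \<in> ball z \<eta>" and "n \<ge> 1" for y n
    unfolding mean_dist_le_iff[OF \<open>n \<ge> 1\<close>]
  proof (rule sum_le_prefix_suffix)
    fix i assume "i < m"
    then have "dist (phi F i y \<omega>1) (phi F i z \<omega>1) \<le> \<epsilon>"
      using close[OF y] by (simp add: less_imp_le)
    then have "infdist (phi F i y \<omega>1) Q \<le> \<epsilon>"
      using infdist_le2[OF stays[of i]] \<open>i < m\<close> by simp
    then show "infdist (phi F i y (ctrl_append m \<omega>1 \<omega>)) Q \<le> \<epsilon>"
      using \<open>i < m\<close> by (simp add: phi_ctrl_append_le)
  next
    fix k :: nat
    have "phi F m y \<omega>1 \<in> ball x \<delta> \<inter> Q"
      using arrive[OF y] W_sub by blast
    then have "(\<Sum>j<k. infdist (phi F j (phi F m y \<omega>1) \<omega>) Q) \<le> real k * \<epsilon>"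
      using bound by (cases "k = 0") (simp_all add: mean_dist_le_iff)
    then show "(\<Sum>j<k. infdist (phi F (m + j) y (ctrl_append m \<omega>1 \<omega>)) Q) \<le> real k * \<epsilon>"
      by (simp add: phi_ctrl_append_add)
  qed
  then show ?thesis
    using \<open>\<eta> > 0\<close> ctrl_append_in_ctrls[OF \<omega>1(1) \<omega>] by blast
qed

theorem mainTheorem8:
  fixes F :: "'a::metric_space \<Rightarrow> 'b::metric_space \<Rightarrow> 'a"
    and U :: "'b set" and Q :: "'a set"
  assumes "compact U"
    and "\<And>u. u \<in> U \<Longrightarrow> continuous_on UNIV (\<lambda>x. F x u)"
    and "continuous_on (UNIV \<times> UNIV \<times> ctrls U) (\<lambda>(k, x, \<omega>). phi F k x \<omega>)"
    and "control_set F U Q"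
    and "closure (interior Q) = closure Q"
  shows "equi_inv_mean F U Q \<or> unstable_mean F U Q"
proof (rule disjCI)
  assume stable: "\<not> unstable_mean F U Q"
  have "equi_inv_mean_point F U Q z" if z: "z \<in> Q" for z
  proof (rule equi_inv_mean_pointI[OF z])
    fix \<epsilon> :: real assume "\<epsilon> > 0"
    then have "\<epsilon> / 2 > 0" and "\<epsilon> / 2 < \<epsilon>"
      by simp_all
    then obtain x \<delta> \<omega> where "x \<in> Q" "\<delta> > 0" "\<omega> \<in> ctrls U"
      and "\<forall>y\<in>ball x \<delta> \<inter> Q. \<forall>n\<ge>1. mean_dist F Q y \<omega> n \<le> \<epsilon> / 2"
      using not_unstable_meanD[OF stable] less_imp_le by meson
    from mean_dist_bound_spreads[OF assms(2,4,5) z this(1-3) \<open>\<epsilon> / 2 > 0\<close> this(4)]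
    show "\<exists>\<eta>>0. \<exists>\<omega>\<in>ctrls U. \<forall>y\<in>ball z \<eta> \<inter> Q. \<forall>n\<ge>1. mean_dist F Q y \<omega> n < \<epsilon>"
      using \<open>\<epsilon> / 2 < \<epsilon>\<close> by (meson le_less_trans)
  qed
  then show "equi_inv_mean F U Q"
    unfolding equi_inv_mean_def by blast
qed

end
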